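(* For every integer $n\ll 0$, every representation $\pi_1(\mathcal{M}(1,n))\to SL_2(\mathbb{R})$ is trivial; consequently every representation $\pi_1(\mathcal{M}(1,n))\to PSL_2(\mathbb{R})$ is trivial.
   Context: $\mathcal{M}$ is the SnapPy census manifold $m137$ with $\pi_1(\mathcal{M})=\langle \lambda,\beta \mid \beta^{-1}\lambda^{-1}\beta^{-1}\lambda^{-1}\beta^{2}\lambda=\lambda\beta^{-2}\lambda^{-1}\beta^{2}\rangle$, where $\lambda$ is the homological longitude and $\mu=\beta^2\lambda^{-1}\beta^{-3}\lambda^{-1}\beta^2$ is a meridian of $\partial\mathcal{M}$. For an integer $n$, $\mathcal{M}(1,n)$ is the Dehn filling of $\mathcal{M}$ along the slope $\mu+n\lambda$, with $\pi_1(\mathcal{M}(1,n))=\pi_1(\mathcal{M})/\langle\langle\mu\lambda^n\rangle\rangle$; it is an integral homology $3$-sphere. *)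

theory Defs
  imports "HOL-Analysis.Analysis"
begin

type_synonym m2 = "real^2^2"

definition SL2 :: "m2 set" where
  "SL2 = {A. det A = 1}"

fun mpow :: "m2 \<Rightarrow> nat \<Rightarrow> m2" where
  "mpow A 0 = mat 1"
| "mpow A (Suc k) = A ** mpow A k"

definition zpow :: "m2 \<Rightarrow> int \<Rightarrow> m2" where
  "zpow A n = (if 0 \<le> n then mpow A (nat n) else mpow (matrix_inv A) (nat (- n)))"

text \<open>The two sides of the defining relator of pi_1(m137), evaluated at L = image of lambda,
  B = image of beta.\<close>
definition rel_lhs :: "m2 \<Rightarrow> m2 \<Rightarrow> m2" where
  "rel_lhs L B = matrix_inv B ** matrix_inv L ** matrix_inv B ** matrix_inv L ** B ** B ** L"

definition rel_rhs :: "m2 \<Rightarrow> m2 \<Rightarrow> m2" where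
  "rel_rhs L B = L ** matrix_inv B ** matrix_inv B ** matrix_inv L ** B ** B"

text \<open>Image of the meridian mu = beta^2 lambda^-1 beta^-3 lambda^-1 beta^2.\<close>
definition mu_img :: "m2 \<Rightarrow> m2 \<Rightarrow> m2" where
  "mu_img L B = B ** B ** matrix_inv L ** matrix_inv B ** matrix_inv B ** matrix_inv B
                 ** matrix_inv L ** B ** B"

text \<open>Image of the filling relator mu lambda^n.\<close>
definition fill_img :: "m2 \<Rightarrow> m2 \<Rightarrow> int \<Rightarrow> m2" where
  "fill_img L B n = mu_img L B ** zpow L n"

text \<open>A homomorphism pi_1(M(1,n)) -> SL_2(R) is given by the images L, B of the generators,
  which must satisfy both relators.\<close>
definition SL2_rep :: "int \<Rightarrow> m2 \<Rightarrow> m2 \<Rightarrow> bool" where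
  "SL2_rep n L B \<longleftrightarrow> L \<in> SL2 \<and> B \<in> SL2 \<and> rel_lhs L B = rel_rhs L B \<and> fill_img L B n = mat 1"

text \<open>A homomorphism pi_1(M(1,n)) -> PSL_2(R) = SL_2(R)/{+-I}, described through lifts L, B in SL_2(R)
  of the images of the generators: relators hold up to sign.\<close>
definition PSL2_rep :: "int \<Rightarrow> m2 \<Rightarrow> m2 \<Rightarrow> bool" where
  "PSL2_rep n L B \<longleftrightarrow> L \<in> SL2 \<and> B \<in> SL2
     \<and> (rel_lhs L B = rel_rhs L B \<or> rel_lhs L B = - rel_rhs L B)
     \<and> (fill_img L B n = mat 1 \<or> fill_img L B n = - mat 1)"

end

theory Submission
  imports Defs
begin

(* Up to conjugation, a representation with L other than +-1 sends lambda to the companion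
   matrix of y = tr L.  The relator then forces polynomial identities between y, x = tr B,
   tr (L B) and the first column of the image of mu.  For |y| <= 2 they contradict the Fricke
   inequality tr [L, B] >= 2 of elliptic and parabolic L.  For |y| > 2 let a be the eigenvalue
   of L with |a| > 1, so that (1, a) is a left eigenvector of the companion matrix.  The filling
   relation gives mu = L^-n, hence (1, a) mu = a^-n (1, a), and eliminating x shows that
   u = a^-2n is a root of the quadratic res_poly a u, which has no root u >= a^10.  So n <= -5
   suffices.  A representation into PSL_2 lifts to SL_2 after changing signs of generators. *)

definition mat2 :: "real \<Rightarrow> real \<Rightarrow> real \<Rightarrow> real \<Rightarrow> m2" where
  "mat2 a b c d = vector [vector [a, b], vector [c, d]]"

lemma mat2_nth [simp]:
  "mat2 a b c d $ 1 $ 1 = a" "mat2 a b c d $ 1 $ 2 = b"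
  "mat2 a b c d $ 2 $ 1 = c" "mat2 a b c d $ 2 $ 2 = d"
  by (simp_all add: mat2_def)

lemma m2_eq_iff:
  "(A::m2) = B \<longleftrightarrow> A$1$1 = B$1$1 \<and> A$1$2 = B$1$2 \<and> A$2$1 = B$2$1 \<and> A$2$2 = B$2$2"
  by (auto simp: vec_eq_iff forall_2)

lemma m2_eq_mat2: "(A::m2) = mat2 (A$1$1) (A$1$2) (A$2$1) (A$2$2)"
  by (simp add: m2_eq_iff)

lemma mat2_eq_iff: "mat2 a b c d = mat2 a' b' c' d' \<longleftrightarrow> a = a' \<and> b = b' \<and> c = c' \<and> d = d'"
  by (simp add: m2_eq_iff)

lemma mat2_mult:
  "mat2 a b c d ** mat2 e f g h = mat2 (a*e + b*g) (a*f + b*h) (c*e + d*g) (c*f + d*h)"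
  by (simp add: m2_eq_iff matrix_matrix_mult_def sum_2)

lemma mat_1_eq_mat2: "(mat 1 :: m2) = mat2 1 0 0 1"
  by (simp add: m2_eq_iff mat_def)

lemma uminus_mat2: "- mat2 a b c d = mat2 (-a) (-b) (-c) (-d)"
  by (simp add: m2_eq_iff)

lemma det_uminus_m2: "det (- (A::m2)) = det A"
  by (simp add: det_2)

lemma det_mat2: "det (mat2 a b c d) = a*d - b*c"
  by (simp add: det_2)

lemma matrix_inv_eqI:
  fixes A X :: "'a::semiring_1^'n^'n"
  assumes "A ** X = mat 1" "X ** A = mat 1"
  shows "matrix_inv A = X"
proof -
  have "\<exists>A'. A ** A' = mat 1 \<and> A' ** A = mat 1"
    using assms by blast
  then have inv: "A ** matrix_inv A = mat 1" "matrix_inv A ** A = mat 1"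
    unfolding matrix_inv_def by (metis (mono_tags, lifting) someI_ex)+
  have "matrix_inv A = matrix_inv A ** (A ** X)"
    using assms by simp
  also have "\<dots> = X"
    by (simp add: matrix_mul_assoc inv)
  finally show ?thesis .
qed

lemma matrix_inv_cancel:
  fixes A :: "'a::field^'n^'n"
  assumes "det A \<noteq> 0"
  shows "A ** matrix_inv A = mat 1" "matrix_inv A ** A = mat 1"
proof -
  have "\<exists>A'. A ** A' = mat 1 \<and> A' ** A = mat 1"
    using assms by (simp add: invertible_det_nz[symmetric] invertible_def)
  then show "A ** matrix_inv A = mat 1" "matrix_inv A ** A = mat 1"
    unfolding matrix_inv_def by (metis (mono_tags, lifting) someI_ex)+
qed

lemma matrix_inv_cancel_left:
  fixes A :: "'a::field^'n^'n"
  assumes "det A \<noteq> 0"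
  shows "matrix_inv A ** (A ** X) = X" "A ** (matrix_inv A ** X) = X"
  by (simp_all add: matrix_mul_assoc matrix_inv_cancel[OF assms])

lemma matrix_inv_mat2:
  "a*d - b*c = 1 \<Longrightarrow> matrix_inv (mat2 a b c d) = mat2 d (-b) (-c) a"
  by (rule matrix_inv_eqI) (simp_all add: mat2_mult mat_1_eq_mat2 mat2_eq_iff algebra_simps)

lemma matrix_mul_uminus_left: "(- A) ** B = - (A ** (B::'a::ring_1^'n^'n))"
  by (simp add: vec_eq_iff matrix_matrix_mult_def sum_negf)

lemma matrix_mul_uminus_right: "A ** (- B) = - (A ** (B::'a::ring_1^'n^'n))"
  by (simp add: vec_eq_iff matrix_matrix_mult_def sum_negf)

lemma matrix_inv_uminus:
  fixes A :: "'a::field^'n^'n"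
  assumes "det A \<noteq> 0"
  shows "matrix_inv (- A) = - matrix_inv A"
  by (rule matrix_inv_eqI)
    (simp_all add: matrix_mul_uminus_left matrix_mul_uminus_right matrix_inv_cancel[OF assms])

lemma mpow_Suc_right: "mpow A (Suc k) = mpow A k ** A"
  by (induction k) (simp_all add: matrix_mul_assoc)

lemma mpow_mat_1: "mpow (mat 1) k = mat 1"
  by (induction k) simp_all

lemma zpow_mat_1: "zpow (mat 1) n = mat 1"
  by (simp add: zpow_def matrix_inv_eqI mpow_mat_1)

lemma mpow_uminus: "mpow (- A) k = (if even k then mpow A k else - mpow A k)"
  by (induction k) (simp_all add: matrix_mul_uminus_left matrix_mul_uminus_right)

lemma mpow_mult_mpow_inverse: "X ** Y = mat 1 \<Longrightarrow> mpow X k ** mpow Y k = mat 1"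
proof (induction k)
  case (Suc k)
  have "mpow X (Suc k) ** mpow Y (Suc k) = X ** (mpow X k ** mpow Y k) ** Y"
    by (simp only: mpow.simps(2)[of X] mpow_Suc_right[of Y] matrix_mul_assoc)
  with Suc show ?case by simp
qed simp

locale SL2_conjugation =
  fixes P Q :: m2
  assumes P_Q: "P ** Q = mat 1" and Q_P: "Q ** P = mat 1"
begin

definition conj :: "m2 \<Rightarrow> m2" where
  "conj X = Q ** X ** P"

lemma conj_mult: "conj X ** conj Y = conj (X ** Y)"
proof -
  have "conj X ** conj Y = Q ** X ** (P ** Q) ** Y ** P"
    by (simp add: conj_def matrix_mul_assoc)
  then show ?thesis
    by (simp add: P_Q conj_def matrix_mul_assoc)
qed

lemma conj_mat_1: "conj (mat 1) = mat 1"
  by (simp add: conj_def Q_P)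

lemma conj_matrix_inv: "det X \<noteq> 0 \<Longrightarrow> matrix_inv (conj X) = conj (matrix_inv X)"
  by (rule matrix_inv_eqI) (simp_all add: conj_mult matrix_inv_cancel conj_mat_1)

lemma det_conj: "det (conj X) = det X"
proof -
  have "det Q * det P = 1"
    using Q_P det_mul[of Q P] by simp
  then show ?thesis
    by (simp add: conj_def det_mul)
qed

lemma conj_mpow: "mpow (conj X) k = conj (mpow X k)"
  by (induction k) (simp_all add: conj_mat_1 conj_mult)

lemma conj_zpow: "det X \<noteq> 0 \<Longrightarrow> zpow (conj X) n = conj (zpow X n)"
  by (simp add: zpow_def conj_matrix_inv conj_mpow)

lemma SL2_rep_conj:
  assumes "SL2_rep n L B"
  shows "SL2_rep n (conj L) (conj B)"
proof -
  have "det L = 1" "det B = 1"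
    using assms by (auto simp: SL2_rep_def SL2_def)
  then have "rel_lhs (conj L) (conj B) = conj (rel_lhs L B)"
    "rel_rhs (conj L) (conj B) = conj (rel_rhs L B)"
    "fill_img (conj L) (conj B) n = conj (fill_img L B n)"
    by (simp_all add: rel_lhs_def rel_rhs_def fill_img_def mu_img_def conj_matrix_inv conj_zpow
        conj_mult)
  with assms show ?thesis
    by (simp add: SL2_rep_def SL2_def det_conj conj_mat_1)
qed

end

definition companion :: "real \<Rightarrow> m2" where
  "companion y = mat2 0 (-1) 1 y"

lemma matrix_inv_companion: "matrix_inv (companion y) = mat2 y 1 (-1) 0"
  using matrix_inv_mat2[of 0 y "-1" 1] by (simp add: companion_def)

lemma cyclic_vector_exists:
  fixes l1 l2 l3 l4 :: real
  assumes "l2 \<noteq> 0 \<or> l3 \<noteq> 0 \<or> l1 \<noteq> l4"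
  obtains u w where "u * (l3*u + l4*w) - w * (l1*u + l2*w) \<noteq> 0"
proof -
  consider "l3 \<noteq> 0" | "l2 \<noteq> 0" | "l2 = 0" "l3 = 0" "l1 \<noteq> l4"
    using assms by blast
  then show ?thesis
    by cases (use that[of 1 0] that[of 0 1] that[of 1 1] in \<open>auto simp: algebra_simps\<close>)
qed

lemma similar_companion:
  fixes L :: m2
  assumes "det L = 1" "L \<noteq> mat 1" "L \<noteq> - mat 1"
  obtains P Q where "P ** Q = mat 1" "Q ** P = mat 1" "Q ** L ** P = companion (trace L)"
proof -
  obtain l1 l2 l3 l4 where L: "L = mat2 l1 l2 l3 l4"
    using m2_eq_mat2 by blast
  have det: "l1*l4 - l2*l3 = 1"
    using assms(1) by (simp add: L det_mat2)
  have "l2 \<noteq> 0 \<or> l3 \<noteq> 0 \<or> l1 \<noteq> l4"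
  proof (rule ccontr)
    assume "\<not> ?thesis"
    then have "l2 = 0" "l3 = 0" "l4 = l1" "l1 = 1 \<or> l1 = -1"
      using det by (auto simp: power2_eq_square[symmetric] power2_eq_1_iff)
    then show False
      using assms(2,3) by (auto simp: L mat_1_eq_mat2 uminus_mat2 mat2_eq_iff)
  qed
  then obtain u w where cyclic: "u * (l3*u + l4*w) - w * (l1*u + l2*w) \<noteq> 0"
    by (rule cyclic_vector_exists)
  \<comment> \<open>P has columns (u, w) and L (u, w), so L P = P (companion (trace L)) by Cayley-Hamilton\<close>
  define u' w' \<delta> where "u' = l1*u + l2*w" and "w' = l3*u + l4*w" and "\<delta> = u*w' - w*u'"
  define P Q where "P = mat2 u u' w w'" and "Q = mat2 (w'/\<delta>) (-u'/\<delta>) (-w/\<delta>) (u/\<delta>)"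
  have "\<delta> \<noteq> 0"
    using cyclic by (simp add: \<delta>_def u'_def w'_def)
  then have P_Q: "P ** Q = mat 1" and Q_P: "Q ** P = mat 1"
    by (simp_all add: P_def Q_def mat2_mult mat_1_eq_mat2 mat2_eq_iff field_simps)
      (simp_all add: \<delta>_def algebra_simps)
  have "L ** P = P ** companion (l1 + l4)"
    using det by (simp add: L P_def companion_def u'_def w'_def mat2_mult mat2_eq_iff) algebra
  then have "Q ** L ** P = companion (l1 + l4)"
    by (metis Q_P matrix_mul_assoc matrix_mul_lid)
  moreover have "trace L = l1 + l4"
    by (simp add: L trace_def sum_2)
  ultimately show ?thesis
    using that P_Q Q_P by simp
qed

(* In the next four lemmas b1 + b4 and b2 - b3 + y*b4 are the traces of B and of companion y ** B.
   Each conclusion is exhibited as a combination of the entries of rel_lhs - rel_rhs modulo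
   det B = 1; the cofactors were found by a Groebner basis computation. *)

lemma companion_rep_product_trace:
  fixes y b1 b2 b3 b4 :: real
  assumes det: "b1*b4 - b2*b3 = 1"
    and rel: "rel_lhs (companion y) (mat2 b1 b2 b3 b4) = rel_rhs (companion y) (mat2 b1 b2 b3 b4)"
  shows "(b1+b4)*y*(b2-b3+y*b4) - (b1+b4)^2 - (b2-b3+y*b4)^2 - y + 2 = 0"
proof -
  let ?D = "\<lambda>i j. rel_lhs (companion y) (mat2 b1 b2 b3 b4) $ i $ j
    - rel_rhs (companion y) (mat2 b1 b2 b3 b4) $ i $ j"
  have "(b1+b4)*y*(b2-b3+y*b4) - (b1+b4)^2 - (b2-b3+y*b4)^2 - y + 2 =
        y * ?D 1 1 - ?D 1 2 + ?D 2 1"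
    using det
    unfolding rel_lhs_def rel_rhs_def matrix_inv_companion matrix_inv_mat2[OF det]
    unfolding companion_def mat2_mult mat2_nth by algebra
  with rel show ?thesis
    by simp
qed

lemma companion_rep_trace_relation:
  fixes y b1 b2 b3 b4 :: real
  assumes det: "b1*b4 - b2*b3 = 1"
    and rel: "rel_lhs (companion y) (mat2 b1 b2 b3 b4) = rel_rhs (companion y) (mat2 b1 b2 b3 b4)"
  shows "(y-2)*(y+1)*((y+1)*(b1+b4)^4 - (y+2)*(b1+b4)^2) = 1"
proof -
  let ?D = "\<lambda>i j. rel_lhs (companion y) (mat2 b1 b2 b3 b4) $ i $ j
    - rel_rhs (companion y) (mat2 b1 b2 b3 b4) $ i $ j"
  have "(y-2)*(y+1)*((y+1)*(b1+b4)^4 - (y+2)*(b1+b4)^2) - 1 =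
        (b1*b2^2*b3*y^3 - 3*b1^2*b2*b3*y^3 - 2*b2*b3*b4^2*y^3 + b2^2*b3*b4*y^3 - 5*b2^2*b3^2*y^3
        + 2*b1*b2*b3^2*y^2 - 8*b1*b2^2*b3*y^2 + 4*b1^2*b2*b3*y^2 + b1^2*b2^2*y^2 - 3*b1^3*b2*y^2
        + 3*b1^3*b3*y^2 + b1^4*y^2 + 6*b2*b3*b4^2*y^2 - 3*b2*b3^2*b4*y^2 - 5*b2^2*b3*b4*y^2 +
        8*b2^2*b3^2*y^2 + b2^3*b3*y^2 - 2*b3*b4^3*y^2 + b4^4*y^2 + b1*b2^2*b3*y + 9*b1^2*b2*b3*y
        - 3*b1^2*b2^2*y + 3*b1^2*b3^2*y + 4*b1^4*y + b2*b3*b4^2*y - 5*b2*b3*y^3 + b2*b3^2*b4*y +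
        5*b2*b3^3*y + b2^2*b3*b4*y + 5*b2^2*b3^2*y - 3*b2^3*b3*y + b3*b4^3*y + 2*b3^2*b4^2*y +
        b4^4*y - 4*b1*b2*y^2 + 2*b1*b3*y^2 + 3*b1^2*y^2 + 12*b2*b3*y^2 - b2*b4*y^2 + b2^2*y^2 -
        3*b3*b4*y^2 + 3*b4^2*y^2 + 4*b1*b2*y + 2*b1*b3*y + 3*b1^2*y + 5*b2*b3*y + 4*b2*b4*y -
        3*b2^2*y + 3*b3*b4*y + 5*b3^2*y + b4^2*y + 3*b1*b2 - 3*b1*b3 - 4*b1^2 + b2*b3 - 2*b3*b4
        + b4^2 + 4*y^2 - y - 2) * ?D 1 1 + (3*b1^2*b2*b3*y^2 - b1*b2^2*b3*y^2 + 2*b2*b3*b4^2*y^2 -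
        b2^2*b3*b4*y^2 + 5*b2^2*b3^2*y^2 - 2*b1*b2*b3^2*y + 8*b1*b2^2*b3*y - 4*b1^2*b2*b3*y -
        b1^2*b2^2*y + 3*b1^3*b2*y - 3*b1^3*b3*y - b1^4*y - 6*b2*b3*b4^2*y + 3*b2*b3^2*b4*y +
        5*b2^2*b3*b4*y - 8*b2^2*b3^2*y - b2^3*b3*y + 2*b3*b4^3*y - b4^4*y - b1*b2^2*b3 -
        9*b1^2*b2*b3 + 3*b1^2*b2^2 - 3*b1^2*b3^2 - 4*b1^4 - b2*b3*b4^2 + 5*b2*b3*y^2 -
        b2*b3^2*b4 - 5*b2*b3^3 - b2^2*b3*b4 - 5*b2^2*b3^2 + 3*b2^3*b3 - b3*b4^3 - 2*b3^2*b4^2 -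
        b4^4 + 4*b1*b2*y - 2*b1*b3*y - 3*b1^2*y - 12*b2*b3*y + b2*b4*y - b2^2*y + 3*b3*b4*y -
        3*b4^2*y - 4*b1*b2 - 4*b1*b3 - 4*b1^2 - 4*b2*b3 - 4*b2*b4 + 3*b2^2 - 5*b3*b4 - 5*b3^2 -
        b4^2 - 4*y + 1) * ?D 1 2 + (b1*b2^2*b3*y^2 - 3*b1^2*b2*b3*y^2 - 2*b2*b3*b4^2*y^2 +
        b2^2*b3*b4*y^2 - 5*b2^2*b3^2*y^2 + 2*b1*b2*b3^2*y - 8*b1*b2^2*b3*y + 4*b1^2*b2*b3*y +
        b1^2*b2^2*y - 3*b1^3*b2*y + 3*b1^3*b3*y + b1^4*y + 6*b2*b3*b4^2*y - 3*b2*b3^2*b4*y -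
        5*b2^2*b3*b4*y + 8*b2^2*b3^2*y + b2^3*b3*y - 2*b3*b4^3*y + b4^4*y + b1*b2^2*b3 +
        9*b1^2*b2*b3 - 3*b1^2*b2^2 + 3*b1^2*b3^2 + 4*b1^4 + b2*b3*b4^2 - 5*b2*b3*y^2 +
        b2*b3^2*b4 + 5*b2*b3^3 + b2^2*b3*b4 + 5*b2^2*b3^2 - 3*b2^3*b3 + b3*b4^3 + 2*b3^2*b4^2 +
        b4^4 - 2*b1*b2*y + 2*b1*b3*y + 3*b1^2*y + 12*b2*b3*y + b2*b4*y - 3*b3*b4*y + 3*b4^2*y -
        3*b1*b2 + 2*b1*b3 + 4*b1^2 + 5*b2*b3 + 3*b2^2 + 3*b3*b4 + 5*b3^2 + b4^2 + 4*y) * ?D 2 1 +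
        (b1*b2*y - 3*b1^2*y - 2*b2*b3*y - 3*b1*b2 - 3*b1*b3 + 3*b1^2 + 3*b2*b3 + b2*b4 - 2*b3*b4
        - b4^2 - 2*y + 1) * ?D 2 2"
    using det
    unfolding rel_lhs_def rel_rhs_def matrix_inv_companion matrix_inv_mat2[OF det]
    unfolding companion_def mat2_mult mat2_nth by algebra
  with rel show ?thesis
    by simp
qed

lemma companion_rep_meridian_11:
  fixes y b1 b2 b3 b4 :: real
  assumes det: "b1*b4 - b2*b3 = 1"
    and rel: "rel_lhs (companion y) (mat2 b1 b2 b3 b4) = rel_rhs (companion y) (mat2 b1 b2 b3 b4)"
  shows "(b1+b4)^4 - 3*(b1+b4)^2
    - (b1+b4) * mu_img (companion y) (mat2 b1 b2 b3 b4) $ 1 $ 1 + 1 = 0"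
proof -
  let ?D = "\<lambda>i j. rel_lhs (companion y) (mat2 b1 b2 b3 b4) $ i $ j
    - rel_rhs (companion y) (mat2 b1 b2 b3 b4) $ i $ j"
  have "(b1+b4)^4 - 3*(b1+b4)^2
      - (b1+b4) * mu_img (companion y) (mat2 b1 b2 b3 b4) $ 1 $ 1 + 1 =
        (b1*b2^2*b3^3*y^2 - b1^2*b2^2*b3^2*y^3 - b2^2*b3^2*b4^2*y^3 - 2*b2^3*b3^3*y^3 +
        b1*b2^3*b3^2*y^2 + b1^2*b2^2*b3^2*y^2 + b1^2*b2^3*b3*y^2 + b1^3*b2*b3^2*y^2 +
        b1^3*b2^2*b3*y^2 - b2*b3^2*b4^3*y^2 + b2^2*b3^2*b4^2*y^2 - b2^2*b3^3*b4*y^2 +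
        2*b2^3*b3^3*y^2 + b2^4*b3^2*y^2 + b1*b2^2*b3^3*y + 3*b1*b2^3*b3^2*y + b1*b2^4*b3*y -
        b1^2*b2*b3*y^3 + b1^2*b2*b3^3*y + 4*b1^2*b2^2*b3^2*y + 3*b1^2*b2^3*b3*y + b1^3*b2^2*b3*y
        + b1^3*b2^3*y + b1^4*b2*b3*y + 2*b1^4*b2^2*y + b2*b3^2*b4^3*y + b2*b3^3*b4^2*y +
        b2^2*b3^2*b4^2*y - 3*b2^2*b3^2*y^3 + 2*b2^2*b3^3*b4*y + 2*b2^2*b3^4*y + 2*b2^3*b3^2*b4*y
        + 4*b2^3*b3^3*y + b2^4*b3^2*y + b1*b2*b3^2*y^2 - b1*b2^2*b3*y^2 + b1^2*b2*b3*y^2 -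
        b1^3*b2*y^2 + b1^3*b3*y^2 - 2*b2*b3^2*b4*y^2 - b2^2*b3*b4*y^2 + 3*b2^2*b3^2*y^2 +
        b2^3*b3*y^2 + 2*b1*b2*b3^2*y + 6*b1*b2^2*b3*y + b1*b2^3*y + 3*b1^2*b2*b3*y +
        2*b1^2*b2^2*y + b1^2*b3^2*y + 2*b1^3*b2*y + b1^4*y - 2*b2*b3*b4^2*y - b2*b3*y^3 +
        3*b2*b3^2*b4*y + 3*b2*b3^3*y + 3*b2^2*b3*b4*y + 3*b2^2*b3^2*y + b2^3*b3*y - b1*b2*b3^2 -
        b1*b2*y^2 - b1*b2^2*b3 - 6*b1^2*b2*b3 - b1^4 + b2*b3*y^2 - b2*b3^2*b4 - 4*b2^2*b3^2 -
        b3*b4*y^2 + 2*b1*b2*y + b1*b3*y - b1^2*y - 3*b2*b3*y + b3*b4*y + b3^2*y - b1*b3 - 2*b1^2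
        - 2*b2*b3 - 2*y) * ?D 1 1 + (b1^2*b2^2*b3^2*y^2 + b2^2*b3^2*b4^2*y^2 + 2*b2^3*b3^3*y^2 -
        b1*b2^2*b3^3*y - b1*b2^3*b3^2*y - b1^2*b2^2*b3^2*y - b1^2*b2^3*b3*y - b1^3*b2*b3^2*y -
        b1^3*b2^2*b3*y + b2*b3^2*b4^3*y - b2^2*b3^2*b4^2*y + b2^2*b3^3*b4*y - 2*b2^3*b3^3*y -
        b2^4*b3^2*y - b1*b2^2*b3^3 - 3*b1*b2^3*b3^2 - b1*b2^4*b3 + b1^2*b2*b3*y^2 - b1^2*b2*b3^3
        - 4*b1^2*b2^2*b3^2 - 3*b1^2*b2^3*b3 - b1^3*b2^2*b3 - b1^3*b2^3 - b1^4*b2*b3 -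
        2*b1^4*b2^2 - b2*b3^2*b4^3 - b2*b3^3*b4^2 - b2^2*b3^2*b4^2 + 3*b2^2*b3^2*y^2 -
        2*b2^2*b3^3*b4 - 2*b2^2*b3^4 - 2*b2^3*b3^2*b4 - 4*b2^3*b3^3 - b2^4*b3^2 - b1*b2*b3^2*y +
        b1*b2^2*b3*y - b1^2*b2*b3*y + b1^3*b2*y - b1^3*b3*y + 2*b2*b3^2*b4*y + b2^2*b3*b4*y -
        3*b2^2*b3^2*y - b2^3*b3*y - 3*b1*b2*b3^2 - 6*b1*b2^2*b3 - b1*b2^3 - 3*b1^2*b2*b3 -
        2*b1^2*b2^2 - b1^2*b3^2 - 2*b1^3*b2 - b1^4 + 2*b2*b3*b4^2 + b2*b3*y^2 - 4*b2*b3^2*b4 -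
        3*b2*b3^3 - 3*b2^2*b3*b4 - 3*b2^2*b3^2 - b2^3*b3 + b1*b2*y - b2*b3*y + b3*b4*y - 2*b1*b2
        - 2*b1*b3 + b1^2 + 3*b2*b3 - b3*b4 - b3^2 + 2) * ?D 1 2 + (b1*b2^2*b3^3*y -
        b1^2*b2^2*b3^2*y^2 - b2^2*b3^2*b4^2*y^2 - 2*b2^3*b3^3*y^2 + b1*b2^3*b3^2*y +
        b1^2*b2^2*b3^2*y + b1^2*b2^3*b3*y + b1^3*b2*b3^2*y + b1^3*b2^2*b3*y - b2*b3^2*b4^3*y +
        b2^2*b3^2*b4^2*y - b2^2*b3^3*b4*y + 2*b2^3*b3^3*y + b2^4*b3^2*y + b1*b2^2*b3^3 +
        3*b1*b2^3*b3^2 + b1*b2^4*b3 - b1^2*b2*b3*y^2 + b1^2*b2*b3^3 + 4*b1^2*b2^2*b3^2 +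
        3*b1^2*b2^3*b3 + b1^3*b2^2*b3 + b1^3*b2^3 + b1^4*b2*b3 + 2*b1^4*b2^2 + b2*b3^2*b4^3 +
        b2*b3^3*b4^2 + b2^2*b3^2*b4^2 - 3*b2^2*b3^2*y^2 + 2*b2^2*b3^3*b4 + 2*b2^2*b3^4 +
        2*b2^3*b3^2*b4 + 4*b2^3*b3^3 + b2^4*b3^2 + b1*b2*b3^2*y + b1^2*b2*b3*y - b1^3*b2*y +
        b1^3*b3*y - 2*b2*b3^2*b4*y + 3*b2^2*b3^2*y + b2^3*b3*y + 2*b1*b2*b3^2 - b1*b2^2*b3 +
        3*b1^2*b2*b3 + b1^2*b3^2 + b1^3*b2 + b1^4 - 2*b2*b3*b4^2 - b2*b3*y^2 + 3*b2*b3^2*b4 +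
        3*b2*b3^3 - 2*b2^2*b3*b4 + 3*b2^2*b3^2 - b2^3*b3 + b2*b3*y - b3*b4*y - 4*b1*b2 + b1*b3 -
        b1^2 - 3*b2*b3 - b2^2 + b3*b4 + b3^2 - 2) * ?D 2 1 + (b1*b2^2*b3 - b1^2*b2*b3*y -
        b2^2*b3^2*y - b1*b2*b3^2 + b1^2*b2*b3 + b1^2*b2^2 + 2*b1^3*b2 - b2*b3*b4^2 - b2*b3^2*b4
        - b1^2*y - b2*b3*y - b1*b3 + b1^2 - b2*b3 - 1) * ?D 2 2"
    using det
    unfolding rel_lhs_def rel_rhs_def mu_img_def matrix_inv_companion matrix_inv_mat2[OF det]
    unfolding companion_def mat2_mult mat2_nth by algebra
  with rel show ?thesis
    by simp
qed

lemma companion_rep_meridian_21: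
  fixes y b1 b2 b3 b4 :: real
  assumes det: "b1*b4 - b2*b3 = 1"
    and rel: "rel_lhs (companion y) (mat2 b1 b2 b3 b4) = rel_rhs (companion y) (mat2 b1 b2 b3 b4)"
  shows "(y+1)*(b1+b4)^4 - (y^2+2*y+2)*(b1+b4)^2
    + (y+1)*(b1+b4) * mu_img (companion y) (mat2 b1 b2 b3 b4) $ 2 $ 1 + 1 = 0"
proof -
  let ?D = "\<lambda>i j. rel_lhs (companion y) (mat2 b1 b2 b3 b4) $ i $ j
    - rel_rhs (companion y) (mat2 b1 b2 b3 b4) $ i $ j"
  have "(y+1)*(b1+b4)^4 - (y^2+2*y+2)*(b1+b4)^2
      + (y+1)*(b1+b4) * mu_img (companion y) (mat2 b1 b2 b3 b4) $ 2 $ 1 + 1 =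
        (b1^2*b2^2*b3^2*y^3 - 4*b1*b2^2*b3^3*y^3 - 4*b1^3*b2*b3^2*y^3 - 2*b2^2*b3^2*b4^2*y^3 -
        b2^3*b3^3*y^3 + 4*b1*b2^2*b3^3*y^2 - 2*b1*b2^3*b3^2*y^2 - 5*b1^2*b2^2*b3^2*y^2 +
        3*b1^3*b2*b3^2*y^2 - b1^3*b2^2*b3*y^2 - 6*b1^4*b2*b3*y^2 + 4*b1^4*b3^2*y^2 -
        2*b2*b3^2*b4^3*y^2 + 2*b2^2*b3*b4^3*y^2 + 4*b2^2*b3^2*b4^2*y^2 - b2^2*b3^3*b4*y^2 -
        4*b2^2*b3^4*y^2 + b2^3*b3^2*b4*y^2 + 5*b2^3*b3^3*y^2 - 4*b1*b2*b3^2*y^3 + 4*b1*b2*b3^4*y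
        - b1*b2^2*b3^3*y + 5*b1*b2^3*b3^2*y + 3*b1^2*b2*b3^3*y + b1^2*b2^2*b3^2*y -
        b1^2*b2^3*b3*y + 2*b1^3*b2*b3^2*y - b1^3*b2^2*b3*y + 4*b1^3*b3^3*y + 3*b1^4*b2*b3*y -
        2*b1^4*b2^2*y - 2*b1^5*b2*y + 4*b1^5*b3*y - b2*b3*b4^2*y^3 + 2*b2*b3*b4^4*y +
        4*b2*b3^2*b4^3*y + 3*b2^2*b3^2*b4^2*y - 2*b2^2*b3^2*y^3 + 5*b2^2*b3^3*b4*y +
        3*b2^2*b3^4*y + 2*b2^3*b3*b4^2*y + 4*b2^3*b3^2*b4*y - b2^3*b3^3*y + 3*b2^4*b3^2*y +
        7*b1*b2*b3^2*y^2 - 3*b1*b2^2*b3*y^2 - 8*b1^2*b2*b3*y^2 + 3*b2*b3*b4^2*y^2 +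
        b2*b3^2*b4*y^2 - 8*b2*b3^3*y^2 + 6*b2^2*b3^2*y^2 - b3*b4^3*y^2 - 5*b1*b2*b3^2*y +
        10*b1*b2^2*b3*y + 4*b1*b3^3*y + 2*b1^2*b2*b3*y - b1^2*b2^2*y + 4*b1^2*b3^2*y -
        4*b1^3*b2*y - 3*b1^3*b3*y - 4*b2*b3*b4^2*y - b2*b3*y^3 + 10*b2*b3^2*b4*y + 6*b2*b3^3*y -
        b2*b4^3*y + 10*b2^2*b3*b4*y - 7*b2^2*b3^2*y + 2*b2^2*b4^2*y + 6*b2^3*b3*y + 4*b3*b4^3*y
        - b3^2*b4^2*y + 3*b1*b2*b3^2 - b1*b2*y^2 + b1*b2^2*b3 + b1*b3*y^2 + 4*b1^2*b2*b3 -
        4*b1^2*b3^2 - b1^3*b3 + b2*b3*y^2 - 3*b2*b3^2*b4 + 4*b2*b3^3 - b2*b4*y^2 - 6*b2^2*b3^2 +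
        b3*b4^3 - 4*b3^2*y^2 + b1*b2*y - 8*b1*b3*y - b1^2*y - 10*b2*b3*y + 2*b2*b4*y + 3*b2^2*y
        + 3*b3*b4*y + 3*b3^2*y - 2*b4^2*y + 5*b1*b3 - 3*b2*b3 - 2*b3*b4 + 2*b3^2 + b4^2 - 3*y) *
        ?D 1 1 + (4*b1*b2^2*b3^3*y^2 - b1^2*b2^2*b3^2*y^2 + 4*b1^3*b2*b3^2*y^2 +
        2*b2^2*b3^2*b4^2*y^2 + b2^3*b3^3*y^2 - 4*b1*b2^2*b3^3*y + 2*b1*b2^3*b3^2*y +
        5*b1^2*b2^2*b3^2*y - 3*b1^3*b2*b3^2*y + b1^3*b2^2*b3*y + 6*b1^4*b2*b3*y - 4*b1^4*b3^2*y
        + 2*b2*b3^2*b4^3*y - 2*b2^2*b3*b4^3*y - 4*b2^2*b3^2*b4^2*y + b2^2*b3^3*b4*y +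
        4*b2^2*b3^4*y - b2^3*b3^2*b4*y - 5*b2^3*b3^3*y + 4*b1*b2*b3^2*y^2 - 4*b1*b2*b3^4 +
        b1*b2^2*b3^3 - 5*b1*b2^3*b3^2 - 3*b1^2*b2*b3^3 - b1^2*b2^2*b3^2 + b1^2*b2^3*b3 -
        2*b1^3*b2*b3^2 + b1^3*b2^2*b3 - 4*b1^3*b3^3 - 3*b1^4*b2*b3 + 2*b1^4*b2^2 + 2*b1^5*b2 -
        4*b1^5*b3 + b2*b3*b4^2*y^2 - 2*b2*b3*b4^4 - 4*b2*b3^2*b4^3 - 3*b2^2*b3^2*b4^2 +
        2*b2^2*b3^2*y^2 - 5*b2^2*b3^3*b4 - 3*b2^2*b3^4 - 2*b2^3*b3*b4^2 - 4*b2^3*b3^2*b4 +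
        b2^3*b3^3 - 3*b2^4*b3^2 - 7*b1*b2*b3^2*y + 3*b1*b2^2*b3*y + 8*b1^2*b2*b3*y -
        3*b2*b3*b4^2*y - b2*b3^2*b4*y + 8*b2*b3^3*y - 6*b2^2*b3^2*y + b3*b4^3*y + 9*b1*b2*b3^2 -
        10*b1*b2^2*b3 - 4*b1*b3^3 - 2*b1^2*b2*b3 + b1^2*b2^2 - 6*b1^2*b3^2 + 4*b1^3*b2 +
        3*b1^3*b3 + 4*b2*b3*b4^2 + b2*b3*y^2 - 11*b2*b3^2*b4 - 4*b2*b3^3 + b2*b4^3 -
        10*b2^2*b3*b4 + 8*b2^2*b3^2 - 2*b2^2*b4^2 - 6*b2^3*b3 - 3*b3*b4^3 + b3^2*b4^2 + b1*b2*y
        - b1*b3*y - b2*b3*y + b2*b4*y + 4*b3^2*y - b1*b2 + 8*b1*b3 + b1^2 + 10*b2*b3 - 2*b2*b4 -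
        3*b2^2 - 3*b3*b4 - 3*b3^2 + 2*b4^2 + 3) * ?D 1 2 + (b1^2*b2^2*b3^2*y^2 - 4*b1*b2^2*b3^3*y^2
        - 4*b1^3*b2*b3^2*y^2 - 2*b2^2*b3^2*b4^2*y^2 - b2^3*b3^3*y^2 + 4*b1*b2^2*b3^3*y -
        2*b1*b2^3*b3^2*y - 5*b1^2*b2^2*b3^2*y + 3*b1^3*b2*b3^2*y - b1^3*b2^2*b3*y -
        6*b1^4*b2*b3*y + 4*b1^4*b3^2*y - 2*b2*b3^2*b4^3*y + 2*b2^2*b3*b4^3*y +
        4*b2^2*b3^2*b4^2*y - b2^2*b3^3*b4*y - 4*b2^2*b3^4*y + b2^3*b3^2*b4*y + 5*b2^3*b3^3*y -
        4*b1*b2*b3^2*y^2 + 4*b1*b2*b3^4 - b1*b2^2*b3^3 + 5*b1*b2^3*b3^2 + 3*b1^2*b2*b3^3 +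
        b1^2*b2^2*b3^2 - b1^2*b2^3*b3 + 2*b1^3*b2*b3^2 - b1^3*b2^2*b3 + 4*b1^3*b3^3 +
        3*b1^4*b2*b3 - 2*b1^4*b2^2 - 2*b1^5*b2 + 4*b1^5*b3 - b2*b3*b4^2*y^2 + 2*b2*b3*b4^4 +
        4*b2*b3^2*b4^3 + 3*b2^2*b3^2*b4^2 - 2*b2^2*b3^2*y^2 + 5*b2^2*b3^3*b4 + 3*b2^2*b3^4 +
        2*b2^3*b3*b4^2 + 4*b2^3*b3^2*b4 - b2^3*b3^3 + 3*b2^4*b3^2 + 7*b1*b2*b3^2*y -
        4*b1*b2^2*b3*y - 3*b1^2*b2*b3*y + 4*b2*b3*b4^2*y + b2*b3^2*b4*y - 8*b2*b3^3*y +
        3*b2^2*b3*b4*y + 9*b2^2*b3^2*y - b3*b4^3*y + b4^4*y - 8*b1*b2*b3^2 + 12*b1*b2^2*b3 +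
        4*b1*b3^3 - 3*b1^2*b2*b3 + b1^2*b2^2 + 4*b1^2*b3^2 - 2*b1^3*b2 - 4*b1^3*b3 -
        3*b2*b3*b4^2 - b2*b3*y^2 + 13*b2*b3^2*b4 + 6*b2*b3^3 - b2*b4^3 - b2^2*b3*b4 -
        2*b2^2*b3^2 + 6*b2^3*b3 + 3*b3*b4^3 - b3^2*b4^2 + b4^4 - b1*b2*y + b1*b3*y + 4*b2*b3*y -
        4*b3^2*y + b4^2*y + 5*b1*b2 - 10*b1*b3 + b1^2 - 3*b2*b3 - 2*b2*b4 + 2*b2^2 + 3*b3*b4 +
        3*b3^2 - 4*b4^2) * ?D 2 1 + (b1^2*b2*b3*y - 4*b1^3*b3*y - 2*b2^2*b3^2*y - 5*b1*b2*b3^2 +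
        b1*b2^2*b3 + b1^2*b2*b3 - 4*b1^2*b3^2 - 2*b1^3*b2 + 4*b1^3*b3 - 2*b1^4 - 2*b2*b3*b4^2 -
        2*b2*b3^2*b4 + 2*b2^2*b3*b4 + 6*b2^2*b3^2 - 3*b2*b3*y + b1*b2 - 4*b1*b3 - 2*b1^2 +
        8*b2*b3 + 2*b2*b4 - b3*b4 - b4^2 - y + 3) * ?D 2 2"
    using det
    unfolding rel_lhs_def rel_rhs_def mu_img_def matrix_inv_companion matrix_inv_mat2[OF det]
    unfolding companion_def mat2_mult mat2_nth by algebra
  with rel show ?thesis
    by simp
qed

lemma Fricke_nonneg_if_elliptic:
  fixes y b1 b2 b3 b4 :: real
  defines "x \<equiv> b1 + b4" and "z \<equiv> b2 - b3 + y*b4"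
  assumes det: "b1*b4 - b2*b3 = 1" and "y^2 \<le> 4"
  shows "0 \<le> x^2 + y^2 + z^2 - x*y*z - 4"
proof -
  have "4 * (x^2 + y^2 + z^2 - x*y*z - 4)
      = (2*(b1 - b4 + y*b3) - y*(b2 + b3))^2 + (4 - y^2) * (b2 + b3)^2"
    using det unfolding x_def z_def by algebra
  also have "\<dots> \<ge> 0"
    using \<open>y^2 \<le> 4\<close> by simp
  finally show ?thesis
    by simp
qed

lemma companion_rep_hyperbolic:
  fixes y b1 b2 b3 b4 :: real
  assumes det: "b1*b4 - b2*b3 = 1"
    and rel: "rel_lhs (companion y) (mat2 b1 b2 b3 b4) = rel_rhs (companion y) (mat2 b1 b2 b3 b4)"
  shows "4 < y^2"
proof (rule ccontr)
  assume "\<not> 4 < y^2"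
  then have "y^2 \<le> 4" and y: "-2 \<le> y" "y \<le> 2"
    using abs_le_square_iff[of y 2] by auto
  define x z where "x = b1 + b4" and "z = b2 - b3 + y*b4"
  have trace: "(y-2)*(y+1)*((y+1)*x^4 - (y+2)*x^2) = 1"
    using companion_rep_trace_relation[OF det rel] by (simp add: x_def)
  have "x*y*z - x^2 - z^2 - y + 2 = 0"
    using companion_rep_product_trace[OF det rel] by (simp add: x_def z_def algebra_simps)
  then have "x^2 + y^2 + z^2 - x*y*z - 4 = (y-2)*(y+1)"
    by algebra
  with Fricke_nonneg_if_elliptic[OF det \<open>y^2 \<le> 4\<close>] have "0 \<le> (y-2)*(y+1)"
    by (simp add: x_def z_def)
  moreover have "y \<noteq> 2"
    using trace by auto
  ultimately have "y + 1 \<le> 0"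
    using y by (auto simp: zero_le_mult_iff)
  then have "(y+1)*x^4 \<le> 0" "0 \<le> (y+2)*x^2"
    using y by (simp_all add: mult_nonpos_nonneg)
  then have "(y+1)*x^4 - (y+2)*x^2 \<le> 0"
    by linarith
  with \<open>0 \<le> (y-2)*(y+1)\<close> show False
    using trace mult_nonneg_nonpos by (metis not_one_le_zero)
qed

lemma eigenvalue_exists:
  fixes y :: real
  assumes "4 < y^2"
  obtains a where "a * y = a^2 + 1" "1 < \<bar>a\<bar>"
proof
  define r where "r = sqrt (y^2 - 4)"
  define a where "a = (y + sgn y * r) / 2"
  have "2 < \<bar>y\<bar>"
    using assms abs_le_square_iff[of y 2] by auto
  have "0 \<le> r" "r^2 = y^2 - 4"
    using assms by (simp_all add: r_def)
  then show "a * y = a^2 + 1"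
    using \<open>2 < \<bar>y\<bar>\<close> unfolding a_def
    by (cases y "0::real" rule: linorder_cases) (auto simp: field_simps power2_eq_square)
  have "\<bar>a\<bar> = (\<bar>y\<bar> + r) / 2"
    using \<open>0 \<le> r\<close> \<open>2 < \<bar>y\<bar>\<close> unfolding a_def
    by (cases y "0::real" rule: linorder_cases) auto
  with \<open>2 < \<bar>y\<bar>\<close> \<open>0 \<le> r\<close> show "1 < \<bar>a\<bar>"
    by simp
qed

lemma companion_left_eigenvector:
  assumes "a * y = a^2 + 1"
  shows "vector [1, a] v* mpow (companion y) k = a^k *s vector [1, a]"
proof (induction k)
  case 0
  then show ?case
    by simp
next
  case (Suc k)
  have "vector [1, a] v* companion y = a *s vector [1, a]"
    using assms by (simp add: vec_eq_iff forall_2 vector_matrix_mult_def sum_2 companion_def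
        power2_eq_square)
  then show ?case
    by (simp add: vector_matrix_mul_assoc[symmetric] scalar_vector_matrix_assoc Suc)
qed

lemma zpow_neg_int: "zpow A (- int k) = mpow (matrix_inv A) k"
  by (cases "k = 0") (simp_all add: zpow_def)

lemma mu_img_eq_mpow:
  assumes "det L \<noteq> 0" and "fill_img L B (- int k) = mat 1"
  shows "mu_img L B = mpow L k"
proof -
  have "mpow (matrix_inv L) k ** mpow L k = mat 1"
    by (rule mpow_mult_mpow_inverse) (rule matrix_inv_cancel[OF assms(1)])
  then have "mu_img L B = fill_img L B (- int k) ** mpow L k"
    by (metis fill_img_def zpow_neg_int matrix_mul_assoc matrix_mul_rid)
  with assms(2) show ?thesis
    by simp
qed

fun horner :: "real list \<Rightarrow> real \<Rightarrow> real" where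
  "horner [] t = 0"
| "horner (c # cs) t = c + t * horner cs t"

lemma horner_nonneg:
  assumes "\<forall>c\<in>set cs. 0 \<le> c" "0 \<le> t"
  shows "0 \<le> horner cs t"
  using assms by (induction cs) auto

lemma horner_pos:
  assumes "0 < c" "\<forall>c\<in>set cs. 0 \<le> c" "0 \<le> t"
  shows "0 < horner (c # cs) t"
  using assms horner_nonneg[of cs t] by (simp add: add_pos_nonneg)

(* res_poly a is the resultant, with respect to X = x^2, of the two relations assumed in
   res_poly_resultant, as a polynomial in u = M^2. *)

definition res_lc :: "real \<Rightarrow> real" where
  "res_lc a = a^3 * (a - 1) * (a^2 + a + 1)^3"

definition res_mc :: "real \<Rightarrow> real" where
  "res_mc a = a^14 + 3*a^13 + 2*a^12 + a^11 - 2*a^10 - 4*a^9 - a^8 - 4*a^7 - a^6 - 4*a^5 - 2*a^4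
    + a^3 + 2*a^2 + 3*a + 1"

definition res_poly :: "real \<Rightarrow> real \<Rightarrow> real" where
  "res_poly a u = res_lc a * u^2 - res_mc a * u - a * res_lc a"

lemma res_poly_resultant:
  fixes a x M :: real
  defines "\<sigma> \<equiv> a^2 + a + 1"
  assumes "a \<noteq> 1"
    and Q: "\<sigma>*(a-1)^2*(\<sigma>*x^4 - (a+1)^2*x^2) = a^3"
    and F: "x*\<sigma>*M = \<sigma>*(x^4 - 3*x^2 + 1) - (a*\<sigma>*x^4 - (\<sigma>^2 + a^2)*x^2 + a^2)"
  shows "res_poly a (M^2) = 0"
proof -
  define X W H where "X = x^2" and "W = a^4 + a^3 - 1" and "H = a^4 - a - 1"
  define K R where "K = \<sigma>^3*(a-1)*M^2 - (a-1)*(a+1)^2*W^2 - 2*W*H" and "R = a^3*W^2 + H^2"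
  have "\<sigma> = (a + 1/2)^2 + 3/4"
    unfolding \<sigma>_def by (simp add: power2_eq_square algebra_simps)
  then have "\<sigma> > 0"
    using zero_le_power2[of "a + 1/2"] by linarith
  have Q: "\<sigma>*(a-1)^2*(\<sigma>*X^2 - (a+1)^2*X) - a^3 = 0"
    using Q by (simp add: X_def power_mult[symmetric])
  \<comment> \<open>reduce F modulo the quadratic Q in X\<close>
  have "x*\<sigma>^2*(a-1)*M - (\<sigma>*(a-1)*W*X + H)
      = \<sigma>*(a-1) * (x*\<sigma>*M - (\<sigma>*(X^2 - 3*X + 1) - (a*\<sigma>*X^2 - (\<sigma>^2 + a^2)*X + a^2)))
        - (\<sigma>*(a-1)^2*(\<sigma>*X^2 - (a+1)^2*X) - a^3)"
    unfolding W_def H_def \<sigma>_def by algebra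
  then have lin: "x*\<sigma>^2*(a-1)*M = \<sigma>*(a-1)*W*X + H"
    using F Q by (simp add: X_def power_mult[symmetric])
  \<comment> \<open>square lin and reduce again\<close>
  have "(\<sigma>*(a-1))^2 * (X*\<sigma>*(a-1)*K - R)
      = (\<sigma>*(a-1))^2 * ((x*\<sigma>^2*(a-1)*M)^2 - (\<sigma>*(a-1)*W*X + H)^2)
        + (\<sigma>*(a-1)*W)^2 * (\<sigma>*(a-1)^2*(\<sigma>*X^2 - (a+1)^2*X) - a^3)"
    unfolding K_def R_def X_def by algebra
  then have XK: "X*\<sigma>*(a-1)*K = R"
    using lin Q \<open>a \<noteq> 1\<close> \<open>\<sigma> > 0\<close> by simp
  \<comment> \<open>substitute X = R / (\<sigma> (a - 1) K) into Q\<close>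
  have "(\<sigma>*(a-1))^2 * (R^2 - (a-1)*(a+1)^2*R*K - a^3*K^2)
      = (\<sigma>*(a-1)*K)^2 * (\<sigma>*(a-1)^2*(\<sigma>*X^2 - (a+1)^2*X) - a^3)
        + (R - X*\<sigma>*(a-1)*K)
          * ((\<sigma>*(a-1))^2 * (R + X*\<sigma>*(a-1)*K) - \<sigma>^2*(a-1)^3*(a+1)^2*K)"
    by algebra
  then have "R^2 - (a-1)*(a+1)^2*R*K - a^3*K^2 = 0"
    using Q XK \<open>a \<noteq> 1\<close> \<open>\<sigma> > 0\<close> by simp
  moreover have "R^2 - (a-1)*(a+1)^2*R*K - a^3*K^2 = - (\<sigma>^3*(a-1) * res_poly a (M^2))"
    unfolding K_def R_def W_def H_def \<sigma>_def res_poly_def res_lc_def res_mc_def by algebra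
  ultimately show ?thesis
    using \<open>a \<noteq> 1\<close> \<open>\<sigma> > 0\<close> by simp
qed

lemma res_poly_root:
  fixes x y a m11 m21 :: real
  assumes trace: "(y-2)*(y+1)*((y+1)*x^4 - (y+2)*x^2) = 1"
    and m11: "x^4 - 3*x^2 - x*m11 + 1 = 0"
    and m21: "(y+1)*x^4 - (y^2+2*y+2)*x^2 + (y+1)*x*m21 + 1 = 0"
    and eig: "a * y = a^2 + 1"
  shows "res_poly a ((m11 + a*m21)^2) = 0"
proof (rule res_poly_resultant)
  define \<sigma> M where "\<sigma> = a^2 + a + 1" and "M = m11 + a*m21"
  have "a \<noteq> 0"
    using eig by auto
  show "a \<noteq> 1"
  proof
    assume "a = 1"
    with eig have "y = 2"
      by simp
    with trace show False
      by simp
  qed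
  have "\<sigma>*(a-1)^2*(\<sigma>*x^4 - (a+1)^2*x^2) - a^3 = a^3 * ((y-2)*(y+1)*((y+1)*x^4 - (y+2)*x^2) - 1)"
    using eig unfolding \<sigma>_def by algebra
  with trace show "\<sigma>*(a-1)^2*(\<sigma>*x^4 - (a+1)^2*x^2) = a^3"
    by (simp add: \<sigma>_def)
  have "x*(y+1)*M = (y+1)*(x^4 - 3*x^2 + 1) - a*((y+1)*x^4 - (y^2+2*y+2)*x^2 + 1)"
    using m11 m21 unfolding M_def by algebra
  then have "a * (x*\<sigma>*M) = a * (\<sigma>*(x^4 - 3*x^2 + 1) - (a*\<sigma>*x^4 - (\<sigma>^2 + a^2)*x^2 + a^2))"
    using eig unfolding \<sigma>_def by algebra
  with \<open>a \<noteq> 0\<close> show "x*\<sigma>*M = \<sigma>*(x^4 - 3*x^2 + 1) - (a*\<sigma>*x^4 - (\<sigma>^2 + a^2)*x^2 + a^2)"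
    by simp
qed

lemma res_poly_pos_if_gt_1:
  assumes "1 < a" "a^10 \<le> u"
  shows "0 < res_poly a u"
proof -
  define t where "t = a - 1"
  have "0 \<le> t" and a: "a = 1 + t"
    using assms(1) by (auto simp: t_def)
  have shift1: "res_lc (1+t) * (1+t)^10 - res_mc (1+t) = horner [4, 55, 328, 2279, 12230, 45233,
    120699, 243793, 385358, 487094, 498929, 417080, 285114, 158947, 71708, 25821, 7258, 1537, 231,
    22, 1] t"
    unfolding res_lc_def res_mc_def horner.simps by algebra
  have shift2: "(1+t)^10 * (res_lc (1+t) * (1+t)^10 - res_mc (1+t)) - (1+t) * res_lc (1+t) = horner
    [4, 68, 869, 7920, 56113, 320647, 1479287, 5526459, 16900688, 42896516, 91568726, 166253657,
    259068233, 348890597, 408140041, 416181712, 370670177, 288543503, 196185698, 116272817,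
    59858307, 26628711, 10162663, 3294654, 895232, 200158, 35873, 4957, 496, 32, 1] t"
    unfolding res_lc_def res_mc_def horner.simps by algebra
  have G: "0 < res_lc a * a^10 - res_mc a"
    unfolding a shift1 by (rule horner_pos) (simp_all add: \<open>0 \<le> t\<close>)
  have "0 < a^10 * (res_lc a * a^10 - res_mc a) - a * res_lc a"
    unfolding a shift2 by (rule horner_pos) (simp_all add: \<open>0 \<le> t\<close>)
  moreover have "a^10 * (res_lc a * a^10 - res_mc a) \<le> u * (res_lc a * u - res_mc a)"
  proof -
    have "0 \<le> res_lc a"
      unfolding res_lc_def using assms(1) by simp
    then have lc: "res_lc a * a^10 \<le> res_lc a * u"
      using assms(2) by (rule mult_left_mono[rotated])
    have "a^10 * (res_lc a * a^10 - res_mc a) \<le> a^10 * (res_lc a * u - res_mc a)"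
      using lc by (intro mult_left_mono) simp_all
    also have "\<dots> \<le> u * (res_lc a * u - res_mc a)"
      using lc G assms(2) by (intro mult_right_mono) simp_all
    finally show ?thesis .
  qed
  ultimately show ?thesis
    by (simp add: res_poly_def power2_eq_square algebra_simps)
qed

lemma res_lc_pos_if_lt_minus_1:
  assumes "a < -1"
  shows "0 < res_lc a"
proof -
  define t where "t = - a - 1"
  have "0 \<le> t" and a: "a = -(1+t)"
    using assms by (auto simp: t_def)
  have shift: "res_lc (-(1+t)) = horner [2, 13, 42, 88, 131, 144, 118, 71, 30, 8, 1] t"
    unfolding res_lc_def horner.simps by algebra
  show ?thesis
    unfolding a shift by (rule horner_pos) (simp_all add: \<open>0 \<le> t\<close>)
qed

lemma res_poly_pos_if_le:
  assumes "a \<le> -3/2" "a^10 \<le> u"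
  shows "0 < res_poly a u"
proof -
  define t where "t = - a - 3/2"
  have "0 \<le> t" and a: "a = -(3/2+t)"
    using assms(1) by (auto simp: t_def)
  have shift: "res_lc (-(3/2+t)) * (-(3/2+t))^10 - res_mc (-(3/2+t)) = horner [2767075529/1048576,
    1085125305/32768, 25902046331/131072, 12298108939/16384, 133727245805/65536, 4323162473/1024,
    14120938757/2048, 1164235651/128, 20144866289/2048, 281650567/32, 1676548649/256,
    129842555/32, 267373097/128, 3553207/4, 2470989/8, 86424, 303893/16, 3158, 747/2, 28, 1] t"
    unfolding res_lc_def res_mc_def horner.simps by algebra
  have "0 < res_lc a * a^10 - res_mc a"
    unfolding a shift by (rule horner_pos) (simp_all add: \<open>0 \<le> t\<close>)
  moreover have "0 < res_lc a"
    using assms(1) by (simp add: res_lc_pos_if_lt_minus_1)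
  moreover have "res_lc a * a^10 \<le> res_lc a * u" "0 \<le> a^10"
    using \<open>0 < res_lc a\<close> assms(2) by (simp_all add: zero_le_even_power)
  ultimately have "0 \<le> u * (res_lc a * u - res_mc a)"
    using assms(2) by (intro mult_nonneg_nonneg) linarith+
  moreover have "0 < - a * res_lc a"
    using \<open>0 < res_lc a\<close> assms(1) mult_neg_pos[of a "res_lc a"] by simp
  ultimately show ?thesis
    by (simp add: res_poly_def power2_eq_square algebra_simps)
qed

lemma res_poly_pos_if_between:
  assumes "-3/2 < a" "a < -1"
  shows "0 < res_poly a u"
proof -
  define t w where "t = - a - 1" and "w = 1/2 - t"
  have "0 < t" "0 < w" and a: "a = -(1+t)"
    using assms by (auto simp: t_def w_def)
  define bernstein where "bernstein =
      21743271936 * w^26 + 706656337920 * t * w^25 + 11021422952448 * t^2 * w^24 +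
      109812582973440 * t^3 * w^23 + 784946075533312 * t^4 * w^22 + 4285412755374080 * t^5 *
      w^21 + 18574634885578752 * t^6 * w^20 + 65591018179788800 * t^7 * w^19 +
      192131883338563584 * t^8 * w^18 + 472911895084400640 * t^9 * w^17 + 987170386027216896
      * t^10 * w^16 + 1758893592082513920 * t^11 * w^15 + 2686355803100545024 * t^12 * w^14
      + 3525197119696977920 * t^13 * w^13 + 3977155038601601024 * t^14 * w^12 +
      3853729331030159360 * t^15 * w^11 + 3198243702394490880 * t^16 * w^10 +
      2262766029417856000 * t^17 * w^9 + 1355412014374362112 * t^18 * w^8 +
      680773168135621120 * t^19 * w^7 + 282896600838633664 * t^20 * w^6 + 95474618667540480
      * t^21 * w^5 + 25487048242053472 * t^22 * w^4 + 5174295291537360 * t^23 * w^3 +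
      749906178476636 * t^24 * w^2 + 69038219437340 * t^25 * w + 3030577238639 * t^26"
  have "4*(1+t)*(res_lc (-(1+t)))^2 - (res_mc (-(1+t)))^2 = t^2 * bernstein"
    unfolding bernstein_def w_def res_lc_def res_mc_def by algebra
  moreover have "0 < bernstein"
    unfolding bernstein_def using \<open>0 < t\<close> \<open>0 < w\<close>
    by (intro add_pos_nonneg mult_pos_pos mult_nonneg_nonneg zero_less_power zero_le_power; simp)
  ultimately have disc: "0 < 4*(1+t)*(res_lc a)^2 - (res_mc a)^2"
    using \<open>0 < t\<close> by (simp add: a)
  have "4 * res_lc a * res_poly a u
      = (2*res_lc a*u - res_mc a)^2 + (4*(1+t)*(res_lc a)^2 - (res_mc a)^2)"
    unfolding res_poly_def a by (simp add: algebra_simps power2_eq_square)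
  with disc have "0 < 4 * res_lc a * res_poly a u"
    using zero_le_power2[of "2*res_lc a*u - res_mc a"] by linarith
  then show ?thesis
    using res_lc_pos_if_lt_minus_1[OF assms(2)] by (simp add: zero_less_mult_iff)
qed

lemma res_poly_pos:
  assumes "1 < \<bar>a\<bar>" "a^10 \<le> u"
  shows "0 < res_poly a u"
  using assms res_poly_pos_if_gt_1 res_poly_pos_if_le res_poly_pos_if_between
  by (cases "1 < a"; cases "a \<le> -3/2") auto

lemma companion_meridian_eigenvalue:
  assumes "fill_img (companion y) B (- int k) = mat 1" and "a * y = a^2 + 1"
  shows "mu_img (companion y) B $ 1 $ 1 + a * mu_img (companion y) B $ 2 $ 1 = a^k"
proof -
  have "det (companion y) \<noteq> 0"
    by (simp add: companion_def det_mat2)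
  then have "mu_img (companion y) B = mpow (companion y) k"
    using assms(1) by (rule mu_img_eq_mpow)
  then have "(vector [1, a] v* mu_img (companion y) B) $ 1 = (a^k *s vector [1, a]) $ 1"
    using companion_left_eigenvector[OF assms(2)] by simp
  then show ?thesis
    by (simp add: vector_matrix_mult_def sum_2 mult.commute)
qed

lemma companion_rep_impossible:
  fixes y b1 b2 b3 b4 :: real
  assumes det: "b1*b4 - b2*b3 = 1"
    and rep: "SL2_rep n (companion y) (mat2 b1 b2 b3 b4)" and "n \<le> -5"
  shows False
proof -
  let ?C = "companion y" and ?B = "mat2 b1 b2 b3 b4"
  have rel: "rel_lhs ?C ?B = rel_rhs ?C ?B" and fill: "fill_img ?C ?B n = mat 1"
    using rep by (auto simp: SL2_rep_def)
  obtain a where eig: "a * y = a^2 + 1" and "1 < \<bar>a\<bar>"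
    using eigenvalue_exists companion_rep_hyperbolic[OF det rel] by blast
  define k where "k = nat (- n)"
  have "5 \<le> k" "n = - int k"
    using \<open>n \<le> -5\<close> by (auto simp: k_def)
  with fill have M: "mu_img ?C ?B $ 1 $ 1 + a * mu_img ?C ?B $ 2 $ 1 = a^k"
    using companion_meridian_eigenvalue[OF _ eig] by simp
  have "res_poly a ((a^k)^2) = 0"
    using res_poly_root[OF companion_rep_trace_relation[OF det rel]
        companion_rep_meridian_11[OF det rel] companion_rep_meridian_21[OF det rel] eig]
    unfolding M .
  moreover have "(a^2)^5 \<le> (a^2)^k"
    using \<open>5 \<le> k\<close> \<open>1 < \<bar>a\<bar>\<close> abs_square_less_1[of a] by (intro power_increasing) auto
  then have "0 < res_poly a ((a^k)^2)"
    by (intro res_poly_pos[OF \<open>1 < \<bar>a\<bar>\<close>]) (simp add: power_mult[symmetric] mult.commute)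
  ultimately show False
    by simp
qed

lemma rel_mat_1:
  assumes "det B \<noteq> 0"
  shows "rel_lhs (mat 1) B = mat 1" "rel_rhs (mat 1) B = mat 1"
  by (simp_all add: rel_lhs_def rel_rhs_def matrix_inv_eqI matrix_mul_assoc[symmetric]
      matrix_inv_cancel_left[OF assms] matrix_inv_cancel[OF assms])

lemma rel_uminus_left:
  assumes "det L \<noteq> 0"
  shows "rel_lhs (- L) B = - rel_lhs L B" "rel_rhs (- L) B = rel_rhs L B"
  by (simp_all add: rel_lhs_def rel_rhs_def matrix_inv_uminus[OF assms]
      matrix_mul_uminus_left matrix_mul_uminus_right)

lemma rel_uminus_right:
  assumes "det B \<noteq> 0"
  shows "rel_lhs L (- B) = rel_lhs L B" "rel_rhs L (- B) = rel_rhs L B"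
  by (simp_all add: rel_lhs_def rel_rhs_def matrix_inv_uminus[OF assms]
      matrix_mul_uminus_left matrix_mul_uminus_right)

lemma fill_img_mat_1:
  assumes "det B \<noteq> 0"
  shows "fill_img (mat 1) B n = B"
  by (simp add: fill_img_def mu_img_def zpow_mat_1 matrix_inv_eqI matrix_mul_assoc[symmetric]
      matrix_inv_cancel_left[OF assms] matrix_inv_cancel[OF assms])

lemma fill_img_uminus_left:
  assumes "det L \<noteq> 0"
  shows "fill_img (- L) B n = fill_img L B n \<or> fill_img (- L) B n = - fill_img L B n"
  by (simp add: fill_img_def mu_img_def zpow_def matrix_inv_uminus[OF assms] mpow_uminus
      matrix_mul_uminus_left matrix_mul_uminus_right)

lemma fill_img_uminus_right:
  assumes "det B \<noteq> 0"
  shows "fill_img L (- B) n = - fill_img L B n"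
  by (simp add: fill_img_def mu_img_def matrix_inv_uminus[OF assms]
      matrix_mul_uminus_left matrix_mul_uminus_right)

lemma SL2_rep_trivial:
  assumes rep: "SL2_rep n L B" and "n \<le> -5"
  shows "L = mat 1 \<and> B = mat 1"
proof -
  have "det L = 1" "det B = 1"
    using rep by (auto simp: SL2_rep_def SL2_def)
  consider "L = mat 1" | "L = - mat 1" | "L \<noteq> mat 1" "L \<noteq> - mat 1"
    by blast
  then show ?thesis
  proof cases
    case 1
    with rep \<open>det B = 1\<close> show ?thesis
      by (simp add: SL2_rep_def fill_img_mat_1)
  next
    case 2
    have "rel_lhs L B = - mat 1" "rel_rhs L B = mat 1"
      using rel_uminus_left[of "mat 1" B] rel_mat_1[of B] \<open>det B = 1\<close> by (simp_all add: 2)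
    moreover have "(- mat 1 :: m2) \<noteq> mat 1"
      by (simp add: mat_1_eq_mat2 uminus_mat2 mat2_eq_iff)
    ultimately show ?thesis
      using rep by (simp add: SL2_rep_def)
  next
    case 3
    then obtain P Q where "P ** Q = mat 1" "Q ** P = mat 1" and L: "Q ** L ** P = companion (trace L)"
      using similar_companion \<open>det L = 1\<close> by blast
    then interpret SL2_conjugation P Q
      by unfold_locales
    obtain b1 b2 b3 b4 where B: "conj B = mat2 b1 b2 b3 b4"
      using m2_eq_mat2 by blast
    have "b1*b4 - b2*b3 = 1"
      using det_conj[of B] \<open>det B = 1\<close> by (simp add: B det_mat2)
    moreover have "SL2_rep n (companion (trace L)) (mat2 b1 b2 b3 b4)"
      using SL2_rep_conj[OF rep] B L unfolding conj_def by simp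
    ultimately show ?thesis
      using companion_rep_impossible \<open>n \<le> -5\<close> by blast
  qed
qed

lemma PSL2_rep_lifts:
  assumes "PSL2_rep n L B"
  obtains L' B' where "L' = L \<or> L' = - L" "B' = B \<or> B' = - B" "SL2_rep n L' B'"
proof -
  have "det L = 1" "det B = 1"
    and rel: "rel_lhs L B = rel_rhs L B \<or> rel_lhs L B = - rel_rhs L B"
    and fill: "fill_img L B n = mat 1 \<or> fill_img L B n = - mat 1"
    using assms by (auto simp: PSL2_rep_def SL2_def)
  obtain L' where L': "L' = L \<or> L' = - L" "rel_lhs L' B = rel_rhs L' B"
    "fill_img L' B n = mat 1 \<or> fill_img L' B n = - mat 1"
    using rel fill rel_uminus_left[of L B] fill_img_uminus_left[of L B n] \<open>det L = 1\<close>
    by (metis minus_minus one_neq_zero)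
  have "det L' = 1"
    using L'(1) \<open>det L = 1\<close> by (auto simp: det_uminus_m2)
  obtain B' where "B' = B \<or> B' = - B" "rel_lhs L' B' = rel_rhs L' B'" "fill_img L' B' n = mat 1"
    using L'(2,3) rel_uminus_right[of B L'] fill_img_uminus_right[of B L' n] \<open>det B = 1\<close>
    by (metis minus_minus one_neq_zero)
  moreover have "det B' = 1"
    using calculation(1) \<open>det B = 1\<close> by (auto simp: det_uminus_m2)
  ultimately show ?thesis
    using that L'(1) \<open>det L' = 1\<close> by (auto simp: SL2_rep_def SL2_def)
qed

lemma PSL2_rep_trivial:
  assumes "PSL2_rep n L B" and "n \<le> -5"
  shows "(L = mat 1 \<or> L = - mat 1) \<and> (B = mat 1 \<or> B = - mat 1)"
proof -
  obtain L' B' where "L' = L \<or> L' = - L" "B' = B \<or> B' = - B" "SL2_rep n L' B'"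
    using assms(1) by (rule PSL2_rep_lifts)
  with SL2_rep_trivial[OF _ assms(2)] show ?thesis
    by (metis minus_minus)
qed

theorem mainTheorem5:
  shows "\<exists>N::int. \<forall>n\<le>N.
           (\<forall>L B. SL2_rep n L B \<longrightarrow> L = mat 1 \<and> B = mat 1)
         \<and> (\<forall>L B. PSL2_rep n L B \<longrightarrow> (L = mat 1 \<or> L = - mat 1) \<and> (B = mat 1 \<or> B = - mat 1))"
  by (intro exI[of _ "-5"]) (use SL2_rep_trivial PSL2_rep_trivial in blast)

end
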